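(* Let $(\Omega,\mathcal F,\mu)$ be a $\sigma$-finite measure space, $\mathcal P_>$ the set of $\mu$-a.s. strictly positive probability densities, and for $p\in\mathcal P_>$ let $H_p=L^2_0(p)=\{u: E_p[u^2]<\infty,\ E_p[u]=0\}$ with inner product $(u,v)\mapsto E_p[uv]$. For $p,q\in\mathcal P_>$ and $u\in H_p$ define $$U_p^q u=\sqrt{\tfrac pq}\,u-\Bigl(1+E_q\Bigl[\sqrt{\tfrac pq}\Bigr]\Bigr)^{-1}\Bigl(1+\sqrt{\tfrac pq}\Bigr)E_q\Bigl[\sqrt{\tfrac pq}\,u\Bigr].$$ Then: (1) $U_p^q$ is an isometry of $H_p$ onto $H_q$; (2) $U_q^p\circ U_p^q u=u$ for all $u\in H_p$, and the adjoint of $U_p^q$ (with respect to the inner products of $H_p$ and $H_q$) is $U_q^p$.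
   Context: $E_p[\cdot]$ denotes expectation with respect to the probability measure $p\cdot\mu$. *)

theory Defs
  imports "HOL-Analysis.Analysis"
begin

definition Ep :: "'a measure \<Rightarrow> ('a \<Rightarrow> real) \<Rightarrow> ('a \<Rightarrow> real) \<Rightarrow> real" where
  "Ep M p f = (\<integral>x. p x * f x \<partial>M)"

definition Ppos :: "'a measure \<Rightarrow> ('a \<Rightarrow> real) set" where
  "Ppos M = {p. p \<in> borel_measurable M \<and> (AE x in M. 0 < p x) \<and>
                 integrable M p \<and> (\<integral>x. p x \<partial>M) = 1}"

text \<open>H_p = L^2_0(p), represented by functions (not a.e.-classes).\<close>
definition Hp :: "'a measure \<Rightarrow> ('a \<Rightarrow> real) \<Rightarrow> ('a \<Rightarrow> real) set" where
  "Hp M p = {u. u \<in> borel_measurable M \<and> integrable M (\<lambda>x. p x * (u x)\<^sup>2) \<and>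
                integrable M (\<lambda>x. p x * u x) \<and> Ep M p u = 0}"

definition inner_p :: "'a measure \<Rightarrow> ('a \<Rightarrow> real) \<Rightarrow> ('a \<Rightarrow> real) \<Rightarrow> ('a \<Rightarrow> real) \<Rightarrow> real" where
  "inner_p M p u v = Ep M p (\<lambda>x. u x * v x)"

definition Utr :: "'a measure \<Rightarrow> ('a \<Rightarrow> real) \<Rightarrow> ('a \<Rightarrow> real) \<Rightarrow> ('a \<Rightarrow> real) \<Rightarrow> ('a \<Rightarrow> real)" where
  "Utr M p q u = (\<lambda>x. sqrt (p x / q x) * u x
      - inverse (1 + Ep M q (\<lambda>y. sqrt (p y / q y))) * (1 + sqrt (p x / q x))
        * Ep M q (\<lambda>y. sqrt (p y / q y) * u y))"

end

theory Submission
  imports Defs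
begin

text \<open>Write \<open>S = sqrt (p/q)\<close>, \<open>r = sqrt (p q) = q S\<close> and let \<open>a = \<integral> r\<close> be the
  Bhattacharyya coefficient of \<open>p\<close> and \<open>q\<close>. Then \<open>U\<^sub>p\<^sup>q u = S u - K u (1 + S)\<close> with
  \<open>K u = (\<integral> r u) / (1 + a)\<close>: multiplication by \<open>S\<close> maps \<open>L\<^sup>2(p)\<close> isometrically to
  \<open>L\<^sup>2(q)\<close>, and the correction along \<open>1 + S\<close> restores mean zero. Expanding gives
  \<open>E\<^sub>q[(U\<^sub>p\<^sup>q u) v] = \<integral> r u v - (\<integral> r u)(\<integral> r v) / (1 + a)\<close>, which is symmetric
  under \<open>(p, u) \<leftrightarrow> (q, v)\<close>; this is the adjointness. Similarly
  \<open>\<integral> r U\<^sub>p\<^sup>q u = - K u (1 + a)\<close>, so the coefficient of \<open>U\<^sub>p\<^sup>q u\<close> is \<open>- K u\<close> and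
  \<open>U\<^sub>q\<^sup>p\<close> inverts \<open>U\<^sub>p\<^sup>q\<close> pointwise. Isometry follows from adjointness and inversion,
  surjectivity from inversion with the roles of \<open>p\<close> and \<open>q\<close> exchanged.\<close>

definition weighted_L2 :: "'a measure \<Rightarrow> ('a \<Rightarrow> real) \<Rightarrow> ('a \<Rightarrow> real) set" where
  "weighted_L2 M w = {f \<in> borel_measurable M. integrable M (\<lambda>x. w x * (f x)\<^sup>2)}"

lemma weighted_L2_D:
  assumes "f \<in> weighted_L2 M w"
  shows "f \<in> borel_measurable M" "integrable M (\<lambda>x. w x * (f x)\<^sup>2)"
  using assms unfolding weighted_L2_def by auto

lemma integrable_sqrt_weights_mult:
  assumes "w \<in> borel_measurable M" "w' \<in> borel_measurable M"
    and "AE x in M. 0 \<le> w x" "AE x in M. 0 \<le> w' x"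
    and f: "f \<in> weighted_L2 M w" and g: "g \<in> weighted_L2 M w'"
  shows "integrable M (\<lambda>x. sqrt (w x * w' x) * f x * g x)"
proof (rule Bochner_Integration.integrable_bound)
  show "integrable M (\<lambda>x. (w x * (f x)\<^sup>2 + w' x * (g x)\<^sup>2) / 2)"
    using weighted_L2_D(2)[OF f] weighted_L2_D(2)[OF g] by auto
  show "(\<lambda>x. sqrt (w x * w' x) * f x * g x) \<in> borel_measurable M"
    using assms weighted_L2_D(1)[OF f] weighted_L2_D(1)[OF g] by measurable
  show "AE x in M. norm (sqrt (w x * w' x) * f x * g x) \<le> norm ((w x * (f x)\<^sup>2 + w' x * (g x)\<^sup>2) / 2)"
    using assms(3,4)
  proof eventually_elim
    case (elim x)
    have "norm (sqrt (w x * w' x) * f x * g x) = sqrt ((w x * (f x)\<^sup>2) * (w' x * (g x)\<^sup>2))"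
      using elim by (simp add: real_sqrt_mult abs_mult)
    also have "\<dots> \<le> (w x * (f x)\<^sup>2 + w' x * (g x)\<^sup>2) / 2"
      using elim by (intro arith_geo_mean_sqrt) auto
    finally show ?case by simp
  qed
qed

lemma integrable_weighted_mult:
  assumes "w \<in> borel_measurable M" "AE x in M. 0 \<le> w x"
    and "f \<in> weighted_L2 M w" "g \<in> weighted_L2 M w"
  shows "integrable M (\<lambda>x. w x * f x * g x)"
proof (rule integrable_cong_AE_imp)
  show "integrable M (\<lambda>x. sqrt (w x * w x) * f x * g x)"
    using assms by (intro integrable_sqrt_weights_mult)
  show "AE x in M. sqrt (w x * w x) * f x * g x = w x * f x * g x"
    using assms(2) by eventually_elim simp
qed (use assms weighted_L2_D in measurable)

lemma weighted_L2_add: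
  assumes "w \<in> borel_measurable M" "AE x in M. 0 \<le> w x"
    and f: "f \<in> weighted_L2 M w" and g: "g \<in> weighted_L2 M w"
  shows "(\<lambda>x. f x + g x) \<in> weighted_L2 M w"
proof -
  have "integrable M (\<lambda>x. w x * (f x)\<^sup>2 + 2 * (w x * f x * g x) + w x * (g x)\<^sup>2)"
    using assms weighted_L2_D integrable_weighted_mult
    by (intro Bochner_Integration.integrable_add integrable_mult_right) auto
  then have "integrable M (\<lambda>x. w x * (f x + g x)\<^sup>2)"
    by (simp add: power2_sum algebra_simps)
  then show ?thesis
    using f g unfolding weighted_L2_def by auto
qed

lemma weighted_L2_cmult:
  assumes "f \<in> weighted_L2 M w"
  shows "(\<lambda>x. c * f x) \<in> weighted_L2 M w"
proof -
  have "integrable M (\<lambda>x. c\<^sup>2 * (w x * (f x)\<^sup>2))"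
    using weighted_L2_D(2)[OF assms] by simp
  then show ?thesis
    using assms unfolding weighted_L2_def by (auto simp: power_mult_distrib mult_ac)
qed

lemma weighted_L2_diff:
  assumes "w \<in> borel_measurable M" "AE x in M. 0 \<le> w x"
    and "f \<in> weighted_L2 M w" "g \<in> weighted_L2 M w"
  shows "(\<lambda>x. f x - g x) \<in> weighted_L2 M w"
  using weighted_L2_add[OF assms(1,2,3) weighted_L2_cmult[OF assms(4), of "-1"]] by simp

lemma weighted_L2_const:
  assumes "integrable M w"
  shows "(\<lambda>x. c) \<in> weighted_L2 M w"
  using assms unfolding weighted_L2_def by auto

lemma has_bochner_integral_AE_eq:
  assumes "has_bochner_integral M g I" "f \<in> borel_measurable M" "AE x in M. f x = g x"
  shows "has_bochner_integral M f I"
  using assms(1) has_bochner_integral_cong_AE[OF assms(2)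
      borel_measurable_has_bochner_integral[OF assms(1)] assms(3)]
  by simp

lemma Hp_iff:
  "u \<in> Hp M p \<longleftrightarrow> u \<in> weighted_L2 M p \<and> has_bochner_integral M (\<lambda>x. p x * u x) 0"
  unfolding Hp_def weighted_L2_def Ep_def by (auto simp: has_bochner_integral_iff)

lemma Hp_measurable: "u \<in> Hp M p \<Longrightarrow> u \<in> borel_measurable M"
  unfolding Hp_def by simp

lemma inner_p_commute: "inner_p M p u v = inner_p M p v u"
  unfolding inner_p_def Ep_def by (simp add: mult.commute)

definition bhattacharyya_coeff :: "'a measure \<Rightarrow> ('a \<Rightarrow> real) \<Rightarrow> ('a \<Rightarrow> real) \<Rightarrow> real" where
  "bhattacharyya_coeff M p q = (\<integral>x. sqrt (p x * q x) \<partial>M)"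

definition Utr_coeff :: "'a measure \<Rightarrow> ('a \<Rightarrow> real) \<Rightarrow> ('a \<Rightarrow> real) \<Rightarrow> ('a \<Rightarrow> real) \<Rightarrow> real" where
  "Utr_coeff M p q u = (\<integral>x. sqrt (p x * q x) * u x \<partial>M) / (1 + bhattacharyya_coeff M p q)"

lemma bhattacharyya_coeff_commute: "bhattacharyya_coeff M q p = bhattacharyya_coeff M p q"
  unfolding bhattacharyya_coeff_def by (simp add: mult.commute)

lemma Utr_coeff_commute: "Utr_coeff M q p u = Utr_coeff M p q u"
  unfolding Utr_coeff_def bhattacharyya_coeff_def by (simp add: mult.commute)

lemma sqrt_ratio_mult:
  fixes P Q :: real
  assumes "0 < P" "0 < Q"
  shows "Q * sqrt (P / Q) = sqrt (P * Q)" "sqrt (P * Q) * sqrt (P / Q) = P"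
    and "sqrt (Q / P) * sqrt (P / Q) = 1"
proof -
  have "sqrt P * sqrt P = P" "sqrt Q * sqrt Q = Q" "sqrt Q \<noteq> 0"
    using assms by auto
  then show "Q * sqrt (P / Q) = sqrt (P * Q)" "sqrt (P * Q) * sqrt (P / Q) = P"
    using assms by (simp_all add: real_sqrt_divide real_sqrt_mult field_simps)
  show "sqrt (Q / P) * sqrt (P / Q) = 1"
    using assms by (simp add: real_sqrt_mult[symmetric])
qed

locale density_pair =
  fixes M :: "'a measure" and p q :: "'a \<Rightarrow> real"
  assumes p_Ppos: "p \<in> Ppos M" and q_Ppos: "q \<in> Ppos M"
begin

lemma swap: "density_pair M q p"
  using p_Ppos q_Ppos by unfold_locales

lemma density_measurable [measurable]: "p \<in> borel_measurable M" "q \<in> borel_measurable M"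
  using p_Ppos q_Ppos unfolding Ppos_def by auto

lemma has_integral_density: "has_bochner_integral M p 1" "has_bochner_integral M q 1"
  using p_Ppos q_Ppos unfolding Ppos_def by (auto simp: has_bochner_integral_iff)

lemma AE_density_pos: "AE x in M. 0 < p x \<and> 0 < q x"
  using p_Ppos q_Ppos unfolding Ppos_def by auto

lemma one_weighted_L2: "(\<lambda>x. 1) \<in> weighted_L2 M p" "(\<lambda>x. 1) \<in> weighted_L2 M q"
  using has_integral_density by (auto simp: has_bochner_integral_iff intro!: weighted_L2_const)

lemma integrable_sqrt_density_mult:
  assumes "u \<in> weighted_L2 M p" "v \<in> weighted_L2 M q"
  shows "integrable M (\<lambda>x. sqrt (p x * q x) * u x * v x)"
  using AE_density_pos assms by (intro integrable_sqrt_weights_mult) (auto elim: eventually_mono)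

lemma has_integral_sqrt_density_mult:
  assumes "u \<in> weighted_L2 M p"
  shows "has_bochner_integral M (\<lambda>x. sqrt (p x * q x) * u x) (\<integral>x. sqrt (p x * q x) * u x \<partial>M)"
  using integrable_sqrt_density_mult[OF assms one_weighted_L2(2)]
  by (simp add: has_bochner_integral_iff)

lemma has_integral_bhattacharyya_coeff:
  "has_bochner_integral M (\<lambda>x. sqrt (p x * q x)) (bhattacharyya_coeff M p q)"
  using has_integral_sqrt_density_mult[OF one_weighted_L2(1)] by (simp add: bhattacharyya_coeff_def)

lemma bhattacharyya_coeff_nonneg: "0 \<le> bhattacharyya_coeff M p q"
  unfolding bhattacharyya_coeff_def using AE_density_pos
  by (intro integral_nonneg_AE) (auto elim: eventually_mono)

lemma Utr_coeff_mult:
  "Utr_coeff M p q u * (1 + bhattacharyya_coeff M p q) = (\<integral>x. sqrt (p x * q x) * u x \<partial>M)"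
  using bhattacharyya_coeff_nonneg unfolding Utr_coeff_def by simp

lemma Ep_sqrt_ratio_mult:
  assumes [measurable]: "u \<in> borel_measurable M"
  shows "Ep M q (\<lambda>x. sqrt (p x / q x) * u x) = (\<integral>x. sqrt (p x * q x) * u x \<partial>M)"
  unfolding Ep_def
proof (rule integral_cong_AE)
  show "AE x in M. q x * (sqrt (p x / q x) * u x) = sqrt (p x * q x) * u x"
    using AE_density_pos by eventually_elim (simp add: sqrt_ratio_mult mult.assoc[symmetric])
qed measurable

lemma Utr_eq:
  assumes [measurable]: "u \<in> borel_measurable M"
  shows "Utr M p q u = (\<lambda>x. sqrt (p x / q x) * u x - Utr_coeff M p q u * (1 + sqrt (p x / q x)))"
  using Ep_sqrt_ratio_mult[OF assms] Ep_sqrt_ratio_mult[of "\<lambda>x. 1"]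
  unfolding Utr_def Utr_coeff_def bhattacharyya_coeff_def by (simp add: divide_inverse mult_ac)

lemma Utr_measurable [measurable]:
  assumes "u \<in> borel_measurable M"
  shows "Utr M p q u \<in> borel_measurable M"
  unfolding Utr_eq[OF assms] using assms by measurable

lemma AE_mult_Utr:
  assumes "u \<in> borel_measurable M"
  defines "K \<equiv> Utr_coeff M p q u"
  shows "AE x in M. q x * Utr M p q u x = sqrt (p x * q x) * u x - K * q x - K * sqrt (p x * q x)"
    and "AE x in M. sqrt (p x * q x) * Utr M p q u x = p x * u x - K * sqrt (p x * q x) - K * p x"
    and "AE x in M. sqrt (q x / p x) * Utr M p q u x + K * (1 + sqrt (q x / p x)) = u x"
proof -
  have expand: "W * (S * U - K * (1 + S)) = (W * S) * U - K * W - K * (W * S)" for W S U :: real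
    by (simp add: algebra_simps)
  show "AE x in M. q x * Utr M p q u x = sqrt (p x * q x) * u x - K * q x - K * sqrt (p x * q x)"
    using AE_density_pos
    by eventually_elim (simp only: Utr_eq[OF assms(1)] K_def[symmetric] expand sqrt_ratio_mult)
  show "AE x in M. sqrt (p x * q x) * Utr M p q u x = p x * u x - K * sqrt (p x * q x) - K * p x"
    using AE_density_pos
    by eventually_elim (simp only: Utr_eq[OF assms(1)] K_def[symmetric] expand sqrt_ratio_mult)
  show "AE x in M. sqrt (q x / p x) * Utr M p q u x + K * (1 + sqrt (q x / p x)) = u x"
    using AE_density_pos
    by eventually_elim
      (simp add: Utr_eq[OF assms(1)] K_def[symmetric] expand sqrt_ratio_mult algebra_simps)
qed

lemma sqrt_ratio_mult_weighted_L2: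
  assumes u: "u \<in> weighted_L2 M p"
  shows "(\<lambda>x. sqrt (p x / q x) * u x) \<in> weighted_L2 M q"
proof -
  have "integrable M (\<lambda>x. q x * (sqrt (p x / q x) * u x)\<^sup>2)"
  proof (rule integrable_cong_AE_imp)
    show "integrable M (\<lambda>x. p x * (u x)\<^sup>2)"
      using weighted_L2_D(2)[OF u] .
    show "AE x in M. p x * (u x)\<^sup>2 = q x * (sqrt (p x / q x) * u x)\<^sup>2"
      using AE_density_pos by eventually_elim (simp add: power_mult_distrib)
  qed (use weighted_L2_D(1)[OF u] in measurable)
  then show ?thesis
    using weighted_L2_D(1)[OF u] unfolding weighted_L2_def by auto
qed

lemma Utr_weighted_L2:
  assumes u: "u \<in> weighted_L2 M p"
  shows "Utr M p q u \<in> weighted_L2 M q"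
proof -
  have q_nonneg: "AE x in M. 0 \<le> q x"
    using AE_density_pos by eventually_elim simp
  have "(\<lambda>x. sqrt (p x / q x)) \<in> weighted_L2 M q"
    using sqrt_ratio_mult_weighted_L2[OF one_weighted_L2(1)] by simp
  then have "(\<lambda>x. 1 + sqrt (p x / q x)) \<in> weighted_L2 M q"
    using q_nonneg one_weighted_L2(2) by (intro weighted_L2_add) auto
  then show ?thesis
    unfolding Utr_eq[OF weighted_L2_D(1)[OF u]]
    using q_nonneg sqrt_ratio_mult_weighted_L2[OF u]
    by (intro weighted_L2_diff weighted_L2_cmult) auto
qed

lemma has_integral_q_mult_Utr:
  assumes u: "u \<in> Hp M p"
  shows "has_bochner_integral M (\<lambda>x. q x * Utr M p q u x) 0"
proof (rule has_bochner_integral_AE_eq)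
  let ?K = "Utr_coeff M p q u"
  have u_L2: "u \<in> weighted_L2 M p"
    using u by (simp add: Hp_iff)
  show "AE x in M. q x * Utr M p q u x = sqrt (p x * q x) * u x - ?K * q x - ?K * sqrt (p x * q x)"
    using AE_mult_Utr(1)[OF weighted_L2_D(1)[OF u_L2]] .
  have "has_bochner_integral M (\<lambda>x. sqrt (p x * q x) * u x - ?K * q x - ?K * sqrt (p x * q x))
      ((\<integral>x. sqrt (p x * q x) * u x \<partial>M) - ?K * 1 - ?K * bhattacharyya_coeff M p q)"
    by (intro has_bochner_integral_diff has_bochner_integral_mult_right
        has_integral_sqrt_density_mult u_L2 has_integral_density has_integral_bhattacharyya_coeff)
  moreover have "(\<integral>x. sqrt (p x * q x) * u x \<partial>M) - ?K * 1 - ?K * bhattacharyya_coeff M p q = 0"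
    using Utr_coeff_mult[of u] by (simp add: algebra_simps)
  ultimately show "has_bochner_integral M
      (\<lambda>x. sqrt (p x * q x) * u x - ?K * q x - ?K * sqrt (p x * q x)) 0"
    by simp
qed (use Hp_measurable[OF u] in measurable)

lemma Utr_Hp:
  assumes "u \<in> Hp M p"
  shows "Utr M p q u \<in> Hp M q"
  using assms Utr_weighted_L2 has_integral_q_mult_Utr by (simp add: Hp_iff)

lemma Utr_coeff_Utr:
  assumes u: "u \<in> Hp M p"
  shows "Utr_coeff M q p (Utr M p q u) = - Utr_coeff M p q u"
proof -
  let ?K = "Utr_coeff M p q u"
  have u_L2: "u \<in> weighted_L2 M p" and u_mean: "has_bochner_integral M (\<lambda>x. p x * u x) 0"
    using u by (simp_all add: Hp_iff)
  have "has_bochner_integral M (\<lambda>x. p x * u x - ?K * sqrt (p x * q x) - ?K * p x)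
      (0 - ?K * bhattacharyya_coeff M p q - ?K * 1)"
    by (intro has_bochner_integral_diff has_bochner_integral_mult_right
        u_mean has_integral_density has_integral_bhattacharyya_coeff)
  then have "has_bochner_integral M (\<lambda>x. sqrt (p x * q x) * Utr M p q u x)
      (0 - ?K * bhattacharyya_coeff M p q - ?K * 1)"
    by (rule has_bochner_integral_AE_eq)
      (use AE_mult_Utr(2) Utr_measurable weighted_L2_D(1)[OF u_L2] in auto)
  then have "(\<integral>x. sqrt (p x * q x) * Utr M p q u x \<partial>M) = - ?K * (1 + bhattacharyya_coeff M p q)"
    by (simp add: has_bochner_integral_integral_eq algebra_simps)
  then show ?thesis
    using bhattacharyya_coeff_nonneg by (simp add: Utr_coeff_commute Utr_coeff_def)
qed

lemma Utr_inverse_AE: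
  assumes u: "u \<in> Hp M p"
  shows "AE x in M. Utr M q p (Utr M p q u) x = u x"
proof -
  interpret qp: density_pair M q p by (rule swap)
  have u_meas: "u \<in> borel_measurable M"
    using u by (rule Hp_measurable)
  show ?thesis
    using AE_mult_Utr(3)[OF u_meas]
    by eventually_elim (simp add: qp.Utr_eq[OF Utr_measurable[OF u_meas]] Utr_coeff_Utr[OF u])
qed

lemma inner_p_Utr:
  assumes u: "u \<in> Hp M p" and v: "v \<in> Hp M q"
  shows "inner_p M q (Utr M p q u) v = (\<integral>x. sqrt (p x * q x) * u x * v x \<partial>M)
    - (\<integral>x. sqrt (p x * q x) * u x \<partial>M) * (\<integral>x. sqrt (p x * q x) * v x \<partial>M)
      / (1 + bhattacharyya_coeff M p q)"
proof -
  let ?K = "Utr_coeff M p q u"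
  have u_L2: "u \<in> weighted_L2 M p" and v_L2: "v \<in> weighted_L2 M q"
    and v_mean: "has_bochner_integral M (\<lambda>x. q x * v x) 0"
    using u v by (simp_all add: Hp_iff)
  have "has_bochner_integral M
      (\<lambda>x. sqrt (p x * q x) * u x * v x - ?K * (q x * v x) - ?K * (sqrt (p x * q x) * v x))
      ((\<integral>x. sqrt (p x * q x) * u x * v x \<partial>M) - ?K * 0 - ?K * (\<integral>x. sqrt (p x * q x) * v x \<partial>M))"
    using integrable_sqrt_density_mult[OF u_L2 v_L2]
      integrable_sqrt_density_mult[OF one_weighted_L2(1) v_L2]
    by (intro has_bochner_integral_diff has_bochner_integral_mult_right v_mean)
      (auto simp: has_bochner_integral_iff)
  then have "has_bochner_integral M (\<lambda>x. q x * (Utr M p q u x * v x))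
      ((\<integral>x. sqrt (p x * q x) * u x * v x \<partial>M) - ?K * 0 - ?K * (\<integral>x. sqrt (p x * q x) * v x \<partial>M))"
  proof (rule has_bochner_integral_AE_eq)
    show "AE x in M. q x * (Utr M p q u x * v x)
      = sqrt (p x * q x) * u x * v x - ?K * (q x * v x) - ?K * (sqrt (p x * q x) * v x)"
      using AE_mult_Utr(1)[OF weighted_L2_D(1)[OF u_L2]]
      by eventually_elim (simp add: mult.assoc[symmetric] left_diff_distrib)
  qed (use Utr_measurable weighted_L2_D(1) u_L2 v_L2 in measurable)
  then show ?thesis
    unfolding inner_p_def Ep_def by (simp add: has_bochner_integral_integral_eq Utr_coeff_def)
qed

lemma Utr_adjoint:
  assumes "u \<in> Hp M p" and "v \<in> Hp M q"
  shows "inner_p M q (Utr M p q u) v = inner_p M p u (Utr M q p v)"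
proof -
  interpret qp: density_pair M q p by (rule swap)
  show ?thesis
    using inner_p_Utr[OF assms] qp.inner_p_Utr[OF assms(2,1)]
    by (simp add: inner_p_commute[of M p u] bhattacharyya_coeff_commute mult_ac)
qed

lemma Utr_isometry:
  assumes u: "u \<in> Hp M p" and v: "v \<in> Hp M p"
  shows "inner_p M q (Utr M p q u) (Utr M p q v) = inner_p M p u v"
proof -
  interpret qp: density_pair M q p by (rule swap)
  have [measurable]: "u \<in> borel_measurable M" "v \<in> borel_measurable M"
    using u v by (simp_all add: Hp_measurable)
  have "inner_p M q (Utr M p q u) (Utr M p q v) = inner_p M p u (Utr M q p (Utr M p q v))"
    using Utr_adjoint[OF u Utr_Hp[OF v]] .
  also have "\<dots> = inner_p M p u v"
    unfolding inner_p_def Ep_def using Utr_inverse_AE[OF v]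
    by (intro integral_cong_AE) (auto elim!: eventually_mono)
  finally show ?thesis .
qed

lemma Utr_surjective:
  assumes "w \<in> Hp M q"
  shows "\<exists>u\<in>Hp M p. AE x in M. Utr M p q u x = w x"
proof -
  interpret qp: density_pair M q p by (rule swap)
  show ?thesis
    using qp.Utr_inverse_AE[OF assms] qp.Utr_Hp[OF assms] by (rule bexI)
qed

end

theorem proposition13:
  fixes M :: "'a measure" and p q :: "'a \<Rightarrow> real"
  assumes "sigma_finite_measure M"
    and "p \<in> Ppos M" and "q \<in> Ppos M"
  shows "(\<forall>u\<in>Hp M p. Utr M p q u \<in> Hp M q)
    \<and> (\<forall>u\<in>Hp M p. \<forall>v\<in>Hp M p. inner_p M q (Utr M p q u) (Utr M p q v) = inner_p M p u v)
    \<and> (\<forall>w\<in>Hp M q. \<exists>u\<in>Hp M p. AE x in M. Utr M p q u x = w x)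
    \<and> (\<forall>u\<in>Hp M p. AE x in M. Utr M q p (Utr M p q u) x = u x)
    \<and> (\<forall>u\<in>Hp M p. \<forall>v\<in>Hp M q. inner_p M q (Utr M p q u) v = inner_p M p u (Utr M q p v))"
proof -
  interpret density_pair M p q
    using assms(2,3) by unfold_locales
  show ?thesis
    by (intro conjI ballI Utr_Hp Utr_isometry Utr_surjective Utr_inverse_AE Utr_adjoint)
qed

end
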